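(* Let $\mathfrak g$ be a nonsemisimple complex Lie algebra, $\mathfrak p$ a nonperfect ideal of $\mathfrak g$, and $\phi:\mathfrak p\to\mathbb C$ a Lie algebra homomorphism. Then $\phi$ is extendable if and only if $[\mathfrak g^{\phi},\mathfrak g^{\phi}]\cap\mathfrak p\subseteq\ker\phi$.
   Context: A Lie algebra homomorphism to $\mathbb C$ is a linear map vanishing on the derived subalgebra. The Whittaker annihilator is $\mathfrak g^{\phi}=\{g\in\mathfrak g:\phi([g,p])=0\ \forall p\in\mathfrak p\}$, a subalgebra of $\mathfrak g$ containing $\mathfrak p$. $\phi$ is called extendable if there exists a Lie algebra homomorphism $\phi':\mathfrak g^\phi\to\mathbb C$ with $\phi'|_{\mathfrak p}=\phi$. *)

theory Defs
  imports Complex_Main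
begin

text \<open>The whole Lie algebra g is the carrier UNIV of the type.\<close>

definition lie_algebra :: "(complex \<Rightarrow> 'a::ab_group_add \<Rightarrow> 'a) \<Rightarrow> ('a \<Rightarrow> 'a \<Rightarrow> 'a) \<Rightarrow> bool" where
  "lie_algebra sc br \<longleftrightarrow>
     vector_space sc \<and>
     (\<forall>y. Vector_Spaces.linear sc sc (\<lambda>x. br x y)) \<and>
     (\<forall>x. Vector_Spaces.linear sc sc (\<lambda>y. br x y)) \<and>
     (\<forall>x. br x x = 0) \<and>
     (\<forall>x y z. br x (br y z) + br y (br z x) + br z (br x y) = 0)"

definition fin_dim_lie :: "(complex \<Rightarrow> 'a::ab_group_add \<Rightarrow> 'a) \<Rightarrow> bool" where
  "fin_dim_lie sc \<longleftrightarrow> (\<exists>B. finite B \<and> module.span sc B = UNIV)"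

definition lie_br_set :: "(complex \<Rightarrow> 'a::ab_group_add \<Rightarrow> 'a) \<Rightarrow> ('a \<Rightarrow> 'a \<Rightarrow> 'a) \<Rightarrow> 'a set \<Rightarrow> 'a set \<Rightarrow> 'a set" where
  "lie_br_set sc br A B = module.span sc {br a b | a b. a \<in> A \<and> b \<in> B}"

definition lie_subalgebra :: "(complex \<Rightarrow> 'a::ab_group_add \<Rightarrow> 'a) \<Rightarrow> ('a \<Rightarrow> 'a \<Rightarrow> 'a) \<Rightarrow> 'a set \<Rightarrow> bool" where
  "lie_subalgebra sc br S \<longleftrightarrow> module.subspace sc S \<and> (\<forall>x\<in>S. \<forall>y\<in>S. br x y \<in> S)"

definition lie_ideal :: "(complex \<Rightarrow> 'a::ab_group_add \<Rightarrow> 'a) \<Rightarrow> ('a \<Rightarrow> 'a \<Rightarrow> 'a) \<Rightarrow> 'a set \<Rightarrow> bool" where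
  "lie_ideal sc br I \<longleftrightarrow> module.subspace sc I \<and> (\<forall>x. \<forall>y\<in>I. br x y \<in> I)"

definition perfect :: "(complex \<Rightarrow> 'a::ab_group_add \<Rightarrow> 'a) \<Rightarrow> ('a \<Rightarrow> 'a \<Rightarrow> 'a) \<Rightarrow> 'a set \<Rightarrow> bool" where
  "perfect sc br S \<longleftrightarrow> lie_br_set sc br S S = S"

fun derived_series :: "(complex \<Rightarrow> 'a::ab_group_add \<Rightarrow> 'a) \<Rightarrow> ('a \<Rightarrow> 'a \<Rightarrow> 'a) \<Rightarrow> 'a set \<Rightarrow> nat \<Rightarrow> 'a set" where
  "derived_series sc br S 0 = S"
| "derived_series sc br S (Suc n) =
     lie_br_set sc br (derived_series sc br S n) (derived_series sc br S n)"

definition solvable :: "(complex \<Rightarrow> 'a::ab_group_add \<Rightarrow> 'a) \<Rightarrow> ('a \<Rightarrow> 'a \<Rightarrow> 'a) \<Rightarrow> 'a set \<Rightarrow> bool" where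
  "solvable sc br S \<longleftrightarrow> (\<exists>n. derived_series sc br S n = {0})"

definition semisimple :: "(complex \<Rightarrow> 'a::ab_group_add \<Rightarrow> 'a) \<Rightarrow> ('a \<Rightarrow> 'a \<Rightarrow> 'a) \<Rightarrow> bool" where
  "semisimple sc br \<longleftrightarrow> (\<forall>I. lie_ideal sc br I \<and> solvable sc br I \<longrightarrow> I = {0})"

text \<open>A Lie algebra homomorphism S -> C (S a subalgebra): a linear map on S
vanishing on the derived subalgebra [S,S].  Values outside S are irrelevant.\<close>
definition lie_hom_to_C :: "(complex \<Rightarrow> 'a::ab_group_add \<Rightarrow> 'a) \<Rightarrow> ('a \<Rightarrow> 'a \<Rightarrow> 'a) \<Rightarrow> 'a set \<Rightarrow> ('a \<Rightarrow> complex) \<Rightarrow> bool" where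
  "lie_hom_to_C sc br S f \<longleftrightarrow>
     (\<forall>x\<in>S. \<forall>y\<in>S. f (x + y) = f x + f y) \<and>
     (\<forall>c. \<forall>x\<in>S. f (sc c x) = c * f x) \<and>
     (\<forall>x\<in>lie_br_set sc br S S. f x = 0)"

definition whittaker_ann :: "('a \<Rightarrow> 'a \<Rightarrow> 'a) \<Rightarrow> 'a set \<Rightarrow> ('a \<Rightarrow> complex) \<Rightarrow> 'a set" where
  "whittaker_ann br P \<phi> = {g. \<forall>p\<in>P. \<phi> (br g p) = 0}"

definition extendable :: "(complex \<Rightarrow> 'a::ab_group_add \<Rightarrow> 'a) \<Rightarrow> ('a \<Rightarrow> 'a \<Rightarrow> 'a) \<Rightarrow> 'a set \<Rightarrow> ('a \<Rightarrow> complex) \<Rightarrow> bool" where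
  "extendable sc br P \<phi> \<longleftrightarrow>
     (\<exists>\<phi>'. lie_hom_to_C sc br (whittaker_ann br P \<phi>) \<phi>' \<and> (\<forall>x\<in>P. \<phi>' x = \<phi> x))"

end

theory Submission
  imports Defs
begin

text \<open>Only the linear structure matters. Write \<open>W\<close> for the Whittaker annihilator
and \<open>D = [W, W]\<close>, a subspace. A linear functional vanishing on \<open>D\<close> is a Lie algebra
homomorphism on \<open>W\<close>, and every extension of \<open>\<phi>\<close> vanishes on \<open>D \<inter> P\<close>. Conversely,
if \<open>\<phi>\<close> vanishes on \<open>D \<inter> P\<close>, then \<open>p + d \<mapsto> \<phi> p\<close> is a well-defined linear
functional on \<open>P + D\<close>, and extending it linearly along a basis gives the required
extension.\<close>

lemma vector_space_field_mult: "vector_space ((*) :: 'a::field \<Rightarrow> 'a \<Rightarrow> 'a)"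
  by unfold_locales (auto simp: algebra_simps)

context vector_space_pair
begin

lemma linear_extension_from_subspace:
  assumes S: "vs1.subspace S"
    and add: "\<And>x y. x \<in> S \<Longrightarrow> y \<in> S \<Longrightarrow> f (x + y) = f x + f y"
    and scale: "\<And>c x. x \<in> S \<Longrightarrow> f (s1 c x) = s2 c (f x)"
  obtains g where "Vector_Spaces.linear s1 s2 g" "\<And>x. x \<in> S \<Longrightarrow> g x = f x"
proof -
  obtain B where B: "B \<subseteq> S" "vs1.independent B" "S \<subseteq> vs1.span B"
    using vs1.maximal_independent_subset by blast
  obtain g where g: "Vector_Spaces.linear s1 s2 g" "\<forall>x\<in>B. g x = f x"
    using linear_independent_extend[OF B(2)] by blast
  interpret g: Vector_Spaces.linear s1 s2 g by (rule g(1))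
  have "vs1.subspace {x \<in> S. g x = f x}"
    unfolding vs1.subspace_def
    using vs1.subspace_0[OF S] vs1.subspace_add[OF S] vs1.subspace_scale[OF S]
      add[of 0 0] add scale g.add g.scale by auto
  then have "vs1.span B \<subseteq> {x \<in> S. g x = f x}"
    using B(1) g(2) by (intro vs1.span_minimal) auto
  then show ?thesis
    using that g(1) B(3) by blast
qed

lemma linear_extension_vanishing_on_subspace:
  assumes P: "vs1.subspace P" and D: "vs1.subspace D"
    and add: "\<And>x y. x \<in> P \<Longrightarrow> y \<in> P \<Longrightarrow> f (x + y) = f x + f y"
    and scale: "\<And>c x. x \<in> P \<Longrightarrow> f (s1 c x) = s2 c (f x)"
    and vanish: "\<And>x. x \<in> P \<Longrightarrow> x \<in> D \<Longrightarrow> f x = 0"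
  obtains g where "Vector_Spaces.linear s1 s2 g"
    "\<And>x. x \<in> P \<Longrightarrow> g x = f x" "\<And>x. x \<in> D \<Longrightarrow> g x = 0"
proof -
  define S where "S = {p + d |p d. p \<in> P \<and> d \<in> D}"
  define h where "h x = f (SOME p. p \<in> P \<and> x - p \<in> D)" for x
  have diff: "f (p - q) = f p - f q" if "p \<in> P" "q \<in> P" for p q
    using add[of "p - q" q] vs1.subspace_diff[OF P that] that by (simp add: eq_diff_eq)
  have h_eq: "h x = f p" if p: "p \<in> P" "x - p \<in> D" for x p
  proof -
    define q where "q = (SOME p. p \<in> P \<and> x - p \<in> D)"
    have q: "q \<in> P" "x - q \<in> D"
      unfolding q_def using someI[of "\<lambda>p. p \<in> P \<and> x - p \<in> D"] p by blast+
    have "p - q = (x - q) - (x - p)" by (simp add: algebra_simps)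
    then have "p - q \<in> D" using vs1.subspace_diff[OF D q(2) p(2)] by simp
    then have "f (p - q) = 0" using vanish vs1.subspace_diff[OF P p(1) q(1)] by blast
    then show ?thesis using diff[OF p(1) q(1)] by (simp add: h_def q_def)
  qed
  have h_add: "h (x + y) = h x + h y" if xy: "x \<in> S" "y \<in> S" for x y
  proof -
    obtain p d q e where "p \<in> P" "d \<in> D" "q \<in> P" "e \<in> D" "x = p + d" "y = q + e"
      using xy unfolding S_def by blast
    moreover have "x + y - (p + q) = d + e" using calculation by (simp add: algebra_simps)
    ultimately show ?thesis
      using h_eq[of p x] h_eq[of q y] h_eq[of "p + q" "x + y"] add
        vs1.subspace_add[OF P] vs1.subspace_add[OF D] by simp
  qed
  have h_scale: "h (s1 c x) = s2 c (h x)" if x: "x \<in> S" for c x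
  proof -
    obtain p d where "p \<in> P" "d \<in> D" "x = p + d"
      using x unfolding S_def by blast
    moreover have "s1 c x - s1 c p = s1 c d" using calculation by (simp add: vs1.scale_right_distrib)
    ultimately show ?thesis
      using h_eq[of p x] h_eq[of "s1 c p" "s1 c x"] scale
        vs1.subspace_scale[OF P] vs1.subspace_scale[OF D] by simp
  qed
  obtain g where g: "Vector_Spaces.linear s1 s2 g" "\<And>x. x \<in> S \<Longrightarrow> g x = h x"
    using linear_extension_from_subspace[of S h] vs1.subspace_sums[OF P D] h_add h_scale
    unfolding S_def by blast
  have "g p = f p" if "p \<in> P" for p
  proof -
    have "p \<in> S" using that vs1.subspace_0[OF D] by (force simp: S_def)
    then show ?thesis using g(2) h_eq[of p p] that vs1.subspace_0[OF D] by simp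
  qed
  moreover have "g d = 0" if "d \<in> D" for d
  proof -
    have "d \<in> S" using that vs1.subspace_0[OF P] by (force simp: S_def)
    then show ?thesis
      using g(2) h_eq[of 0 d] that vs1.subspace_0[OF P] vanish[of 0] vs1.subspace_0[OF D] by simp
  qed
  ultimately show ?thesis using that g(1) by blast
qed

end

lemma lie_hom_to_C_if_linear:
  assumes "Vector_Spaces.linear sc (*) g" and "\<forall>x\<in>lie_br_set sc br S S. g x = 0"
  shows "lie_hom_to_C sc br S g"
  using assms unfolding lie_hom_to_C_def Vector_Spaces.linear_iff by simp

lemma lie_hom_extension_exists_iff:
  fixes sc :: "complex \<Rightarrow> 'a::ab_group_add \<Rightarrow> 'a"
  assumes vs: "vector_space sc" and P: "module.subspace sc P"
    and \<phi>: "lie_hom_to_C sc br P \<phi>"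
  shows "(\<exists>\<phi>'. lie_hom_to_C sc br W \<phi>' \<and> (\<forall>x\<in>P. \<phi>' x = \<phi> x)) \<longleftrightarrow>
           lie_br_set sc br W W \<inter> P \<subseteq> {x \<in> P. \<phi> x = 0}"
proof
  assume "\<exists>\<phi>'. lie_hom_to_C sc br W \<phi>' \<and> (\<forall>x\<in>P. \<phi>' x = \<phi> x)"
  then show "lie_br_set sc br W W \<inter> P \<subseteq> {x \<in> P. \<phi> x = 0}"
    by (auto simp: lie_hom_to_C_def)
next
  assume vanish: "lie_br_set sc br W W \<inter> P \<subseteq> {x \<in> P. \<phi> x = 0}"
  interpret vector_space_pair sc "(*) :: complex \<Rightarrow> complex \<Rightarrow> complex"
    using vs vector_space_field_mult by (simp add: vector_space_pair_def)
  obtain g where "Vector_Spaces.linear sc (*) g" "\<And>x. x \<in> P \<Longrightarrow> g x = \<phi> x"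
      "\<And>x. x \<in> lie_br_set sc br W W \<Longrightarrow> g x = 0"
    using linear_extension_vanishing_on_subspace[OF P, of "lie_br_set sc br W W" \<phi>]
      \<phi> vanish by (auto simp: lie_hom_to_C_def lie_br_set_def)
  then show "\<exists>\<phi>'. lie_hom_to_C sc br W \<phi>' \<and> (\<forall>x\<in>P. \<phi>' x = \<phi> x)"
    using lie_hom_to_C_if_linear by blast
qed

theorem proposition3p5:
  fixes sc :: "complex \<Rightarrow> 'a::ab_group_add \<Rightarrow> 'a"
    and br :: "'a \<Rightarrow> 'a \<Rightarrow> 'a"
    and P :: "'a set"
    and \<phi> :: "'a \<Rightarrow> complex"
  assumes "lie_algebra sc br"
    and "fin_dim_lie sc"
    and "\<not> semisimple sc br"
    and "lie_ideal sc br P"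
    and "\<not> perfect sc br P"
    and "lie_hom_to_C sc br P \<phi>"
  shows "extendable sc br P \<phi> \<longleftrightarrow>
           lie_br_set sc br (whittaker_ann br P \<phi>) (whittaker_ann br P \<phi>) \<inter> P
             \<subseteq> {x \<in> P. \<phi> x = 0}"
proof -
  have "vector_space sc" using assms(1) by (simp add: lie_algebra_def)
  moreover have "module.subspace sc P" using assms(4) by (simp add: lie_ideal_def)
  ultimately show ?thesis
    unfolding extendable_def using lie_hom_extension_exists_iff assms(6) by blast
qed

end
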